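(* Let $f,a_1,p,d_2\in\mathbb{C}$ with $\mathrm{Re}(f-2a_1-2d_2-2)>-1$, such that the series below is well defined (no lower parameter is a nonpositive integer), $a_1\neq0$, and the quantities below are defined and $k$ is not a nonpositive integer. Put $$h=\frac{p(f-p-1)}{a_1},\qquad k=\frac{h(1+d_2+a_1-f)}{d_2-h}.$$ Then $$ {}_{6}F_{5}\left[\begin{matrix} f-1,\ \frac{f+1}{2},\ f-p,\ p+1,\ a_1,\ d_2\\ \frac{f-1}{2},\ p,\ f-p-1,\ f-a_1,\ f-d_2\end{matrix};-1\right]=\frac{\Gamma(f-a_1)\Gamma(f-d_2)}{\Gamma(f)\Gamma(f-a_1-d_2-1)}\cdot\frac{\Gamma(k)}{\Gamma(k+1)}.$$
   Context: $(x)_n$ denotes the Pochhammer symbol: $(x)_0=1$, $(x)_n=x(x+1)\cdots(x+n-1)$ for $n\ge1$. The generalized hypergeometric function is $${}_{r+1}F_{r}\left[\begin{matrix} a_1,\dots,a_{r+1}\\ b_1,\dots,b_r\end{matrix};z\right]=\sum_{n=0}^{\infty}\frac{(a_1)_n\cdots(a_{r+1})_n}{(b_1)_n\cdots(b_r)_n\,n!}z^n ,$$ where no $b_i$ is a nonpositive integer. $\Gamma$ is Euler's gamma function. *)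

theory Defs
  imports "HOL-Analysis.Analysis"
begin

definition hypergeom :: "complex list \<Rightarrow> complex list \<Rightarrow> complex \<Rightarrow> complex" where
  "hypergeom as bs z =
     (\<Sum>n. (prod_list (map (\<lambda>a. pochhammer a n) as) /
            (prod_list (map (\<lambda>b. pochhammer b n) bs) * fact n)) * z ^ n)"

end

theory Submission
  imports Defs
begin

(* Write a = f - 1 and q = f - p - 1, so that p + q = a. Termwise, the 6F5 series is
   (1/a) t_n (p + n)(q + n)/(p q), where t_n = (a + 2n) (a)_n (a1)_n (d2)_n (-1)^n /
   ((1+a-a1)_n (1+a-d2)_n n!) is the term of the very-well-poised 4F3 at -1. Splitting
   (p + n)(q + n) = (p q - a1 d2) + (n (n + a) + a1 d2), the second part gives a telescoping
   series with sum 0, so the 6F5 equals (1 - a1 d2/(p q)) times Bailey's sum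
   Gamma(1+a-a1) Gamma(1+a-d2) / (Gamma(1+a) Gamma(1+a-a1-d2)) of the 4F3; and
   1 - a1 d2/(p q) = (h - d2)/h = (f - a1 - d2 - 1)/k.
   Bailey's sum is the limit N -> oo (by Tannery's theorem) of the terminating very-well-poised
   5F4 sum with fourth parameter -N, which is proved by induction on N: a telescoping identity
   relates the 5F4 with parameters (a, b, c, d) to the one with (a + 2, b + 1, c + 1, d + 1). *)

section \<open>Quotients of Pochhammer symbols\<close>

lemma prod_list_pochhammer_Suc:
  fixes as :: "complex list"
  shows "(\<Prod>x\<leftarrow>as. pochhammer x (Suc n)) =
    (\<Prod>x\<leftarrow>as. rGamma_series x n) * fact n ^ length as * exp (sum_list as * of_real (ln (real n)))"
  by (induction as) (simp_all add: rGamma_series_def exp_add distrib_right)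

lemma pochhammer_quotient_Suc_eq:
  fixes as bs :: "complex list"
  assumes "length as = length bs"
  shows "(\<Prod>x\<leftarrow>as. pochhammer x (Suc n)) / (\<Prod>y\<leftarrow>bs. pochhammer y (Suc n)) =
    (\<Prod>x\<leftarrow>as. rGamma_series x n) / (\<Prod>y\<leftarrow>bs. rGamma_series y n)
      * exp ((sum_list as - sum_list bs) * of_real (ln (real n)))"
  unfolding prod_list_pochhammer_Suc assms
  by (simp add: exp_diff left_diff_distrib)

lemma tendsto_prod_list:
  fixes f :: "'a \<Rightarrow> 'b \<Rightarrow> 'c::{real_normed_algebra_1,comm_monoid_mult}"
  assumes "\<And>x. x \<in> set xs \<Longrightarrow> (f x \<longlongrightarrow> l x) F"
  shows "((\<lambda>n. \<Prod>x\<leftarrow>xs. f x n) \<longlongrightarrow> (\<Prod>x\<leftarrow>xs. l x)) F"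
  using assms by (induction xs) (auto intro!: tendsto_mult)

lemma rGamma_series_quotient_LIMSEQ:
  fixes as bs :: "complex list"
  assumes "\<forall>y\<in>set bs. y \<notin> \<int>\<^sub>\<le>\<^sub>0"
  shows "(\<lambda>n. (\<Prod>x\<leftarrow>as. rGamma_series x n) / (\<Prod>y\<leftarrow>bs. rGamma_series y n))
           \<longlonglongrightarrow> (\<Prod>x\<leftarrow>as. rGamma x) / (\<Prod>y\<leftarrow>bs. rGamma y)"
  using assms
  by (intro tendsto_divide tendsto_prod_list rGamma_series_LIMSEQ)
     (auto simp: prod_list_zero_iff rGamma_eq_zero_iff)

lemma pochhammer_balanced_quotient_LIMSEQ:
  fixes as bs :: "complex list"
  assumes "length as = length bs" "sum_list as = sum_list bs" "\<forall>y\<in>set bs. y \<notin> \<int>\<^sub>\<le>\<^sub>0"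
  shows "(\<lambda>n. (\<Prod>x\<leftarrow>as. pochhammer x n) / (\<Prod>y\<leftarrow>bs. pochhammer y n))
           \<longlonglongrightarrow> (\<Prod>x\<leftarrow>as. rGamma x) / (\<Prod>y\<leftarrow>bs. rGamma y)"
proof -
  have "(\<lambda>n. (\<Prod>x\<leftarrow>as. pochhammer x (Suc n)) / (\<Prod>y\<leftarrow>bs. pochhammer y (Suc n)))
           \<longlonglongrightarrow> (\<Prod>x\<leftarrow>as. rGamma x) / (\<Prod>y\<leftarrow>bs. rGamma y)"
    using rGamma_series_quotient_LIMSEQ[OF assms(3), of as]
    by (simp add: pochhammer_quotient_Suc_eq[OF assms(1)] assms(2))
  then show ?thesis
    by (rule LIMSEQ_imp_Suc)
qed

lemma pochhammer_quotient_Suc_bound: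
  fixes as bs :: "complex list"
  assumes "length as = length bs" "\<forall>y\<in>set bs. y \<notin> \<int>\<^sub>\<le>\<^sub>0"
  obtains B where "\<And>n. n \<ge> 1 \<Longrightarrow>
    norm ((\<Prod>x\<leftarrow>as. pochhammer x (Suc n)) / (\<Prod>y\<leftarrow>bs. pochhammer y (Suc n)))
      \<le> B * real n powr Re (sum_list as - sum_list bs)"
proof -
  let ?\<rho> = "\<lambda>n. (\<Prod>x\<leftarrow>as. rGamma_series x n) / (\<Prod>y\<leftarrow>bs. rGamma_series y n)"
  have "Bseq ?\<rho>"
    using rGamma_series_quotient_LIMSEQ[OF assms(2)] by (intro convergent_imp_Bseq convergentI)
  then obtain B where B: "\<And>n. norm (?\<rho> n) \<le> B"
    by (meson BseqE)
  have "norm ((\<Prod>x\<leftarrow>as. pochhammer x (Suc n)) / (\<Prod>y\<leftarrow>bs. pochhammer y (Suc n)))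
      = norm (?\<rho> n) * real n powr Re (sum_list as - sum_list bs)" if "n \<ge> 1" for n
    unfolding pochhammer_quotient_Suc_eq[OF assms(1)] norm_mult norm_exp_eq_Re
    using that by (simp add: powr_def)
  with B have "norm ((\<Prod>x\<leftarrow>as. pochhammer x (Suc n)) / (\<Prod>y\<leftarrow>bs. pochhammer y (Suc n)))
      \<le> B * real n powr Re (sum_list as - sum_list bs)" if "n \<ge> 1" for n
    using that by (simp add: mult_right_mono)
  with that show ?thesis .
qed

section \<open>The terminating very-well-poised 5F4 sum\<close>

definition wp_coeff :: "complex \<Rightarrow> complex list \<Rightarrow> nat \<Rightarrow> complex" where
  "wp_coeff a bs n = pochhammer a n / fact n * (\<Prod>b\<leftarrow>bs. pochhammer b n / pochhammer (1 + a - b) n)"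

lemma wp_coeff_Cons:
  "wp_coeff a (b # bs) n = wp_coeff a bs n * (pochhammer b n / pochhammer (1 + a - b) n)"
  by (simp add: wp_coeff_def ac_simps)

lemma wp_coeff_Suc:
  assumes "\<forall>b\<in>set bs. 1 + a - b \<notin> \<int>\<^sub>\<le>\<^sub>0"
  shows "wp_coeff a bs (Suc k) * (of_nat (Suc k) * (\<Prod>b\<leftarrow>bs. a - b + of_nat (Suc k))) =
         wp_coeff a bs k * ((a + of_nat k) * (\<Prod>b\<leftarrow>bs. b + of_nat k))"
  using assms
proof (induction bs)
  case Nil
  have "pochhammer a (Suc k) / fact (Suc k) * of_nat (Suc k) =
      pochhammer a k / fact k * (a + of_nat k)"
    by (simp add: pochhammer_Suc fact_Suc del: of_nat_Suc)
  then show ?case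
    by (simp add: wp_coeff_def)
next
  case (Cons b bs)
  define c where "c = 1 + a - b + of_nat k"
  have "pochhammer (1 + a - b) k \<noteq> 0" "c \<noteq> 0"
    using Cons.prems unfolding c_def
    by (auto dest: pochhammer_eq_0_imp_nonpos_Int plus_of_nat_eq_0_imp)
  moreover have "pochhammer (1 + a - b) (Suc k) = pochhammer (1 + a - b) k * c"
    "a - b + of_nat (Suc k) = c"
    unfolding c_def by (simp_all add: pochhammer_Suc)
  ultimately have step:
    "pochhammer b (Suc k) / pochhammer (1 + a - b) (Suc k) * (a - b + of_nat (Suc k)) =
       pochhammer b k / pochhammer (1 + a - b) k * (b + of_nat k)"
    by (simp add: pochhammer_Suc field_simps)
  have IH: "wp_coeff a bs (Suc k) * (of_nat (Suc k) * (\<Prod>b\<leftarrow>bs. a - b + of_nat (Suc k))) =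
      wp_coeff a bs k * ((a + of_nat k) * (\<Prod>b\<leftarrow>bs. b + of_nat k))"
    using Cons by simp
  show ?case
    using arg_cong2[OF IH step, of "(*)"]
    by (simp only: wp_coeff_Cons list.map prod_list.Cons mult_ac)
qed

lemma wp_coeff_shift:
  "wp_coeff a bs (Suc m) * (of_nat (Suc m) * (a + of_nat (Suc m))) =
   wp_coeff (a + 2) (map (\<lambda>b. b + 1) bs) m * (a * (a + 1) * (\<Prod>b\<leftarrow>bs. b / (1 + a - b)))"
proof (induction bs)
  case Nil
  have "pochhammer a (Suc m) * (a + of_nat (Suc m)) = pochhammer a (Suc (Suc m))"
    by (simp only: pochhammer_Suc)
  also have "\<dots> = a * (a + 1) * pochhammer (a + 2) m"
    by (simp add: pochhammer_rec add.assoc)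
  finally have "pochhammer a (Suc m) / fact (Suc m) * (of_nat (Suc m) * (a + of_nat (Suc m))) =
      pochhammer (a + 2) m / fact m * (a * (a + 1))"
    by (simp add: fact_Suc del: of_nat_Suc)
  then show ?case
    by (simp add: wp_coeff_def)
next
  case (Cons b bs)
  have "1 + (a + 2) - (b + 1) = (1 + a - b) + 1"
    by simp
  then have "pochhammer b (Suc m) / pochhammer (1 + a - b) (Suc m) =
             b / (1 + a - b) * (pochhammer (b + 1) m / pochhammer (1 + (a + 2) - (b + 1)) m)"
    by (simp add: pochhammer_rec)
  with Cons show ?case
    by (simp add: wp_coeff_Cons ac_simps)
qed

lemma vwp_quadratic_weight_sum_shift:
  "(\<Sum>k\<le>Suc N. (a + 2 * of_nat k) * wp_coeff a bs k * (of_nat k * (a + of_nat k))) =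
   a * (a + 1) * (\<Prod>b\<leftarrow>bs. b / (1 + a - b)) *
     (\<Sum>m\<le>N. (a + 2 + 2 * of_nat m) * wp_coeff (a + 2) (map (\<lambda>b. b + 1) bs) m)"
proof -
  have term_shift:
    "(a + 2 * of_nat (Suc m)) * wp_coeff a bs (Suc m) * (of_nat (Suc m) * (a + of_nat (Suc m))) =
        a * (a + 1) * (\<Prod>b\<leftarrow>bs. b / (1 + a - b)) *
          ((a + 2 + 2 * of_nat m) * wp_coeff (a + 2) (map (\<lambda>b. b + 1) bs) m)" for m
    using arg_cong[OF wp_coeff_shift[of a bs m], of "(*) (a + 2 * of_nat (Suc m))"]
    by (simp add: ac_simps)
  show ?thesis
    unfolding sum.atMost_Suc_shift term_shift by (simp add: sum_distrib_left)
qed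

lemma vwp_5F4_contiguous:
  assumes "1 + a - b \<notin> \<int>\<^sub>\<le>\<^sub>0" "1 + a - c \<notin> \<int>\<^sub>\<le>\<^sub>0" "1 + a - d \<notin> \<int>\<^sub>\<le>\<^sub>0"
    and "pochhammer d (Suc (Suc N)) = 0"
  shows "b * c * d * (\<Sum>k\<le>Suc N. (a + 2 * of_nat k) * wp_coeff a [b, c, d] k) =
    (a - b - c - d) * a * (a + 1) * (\<Prod>x\<leftarrow>[b, c, d]. x / (1 + a - x)) *
      (\<Sum>m\<le>N. (a + 2 + 2 * of_nat m) * wp_coeff (a + 2) [b + 1, c + 1, d + 1] m)"
proof -
  define X where
    "X k = wp_coeff a [b, c, d] k * (of_nat k * (\<Prod>x\<leftarrow>[b, c, d]. a - x + of_nat k))" for k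
  define t where "t k = (a + 2 * of_nat k) * wp_coeff a [b, c, d] k" for k
  have diff: "X (Suc k) - X k =
      (b + c + d - a) * (t k * (of_nat k * (a + of_nat k))) + b * c * d * t k" for k
  proof -
    have "X (Suc k) = wp_coeff a [b, c, d] k * ((a + of_nat k) * (\<Prod>x\<leftarrow>[b, c, d]. x + of_nat k))"
      unfolding X_def using assms(1-3) by (intro wp_coeff_Suc) simp
    then show ?thesis
      unfolding X_def t_def by (simp add: algebra_simps)
  qed
  have "(\<Sum>k\<le>Suc N. (b + c + d - a) * (t k * (of_nat k * (a + of_nat k))) + b * c * d * t k) =
      (\<Sum>k<Suc (Suc N). X (Suc k) - X k)"
    unfolding lessThan_Suc_atMost diff ..
  also have "\<dots> = X (Suc (Suc N)) - X 0"
    by (rule sum_lessThan_telescope)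
  also have "\<dots> = 0"
    using assms(4) by (simp add: X_def wp_coeff_def)
  finally have "b * c * d * (\<Sum>k\<le>Suc N. t k) =
      - ((b + c + d - a) * (\<Sum>k\<le>Suc N. t k * (of_nat k * (a + of_nat k))))"
    by (simp only: sum.distrib sum_distrib_left add_eq_0_iff2 add.commute)
  also have "\<dots> = (a - b - c - d) * (\<Sum>k\<le>Suc N. t k * (of_nat k * (a + of_nat k)))"
    by (simp add: algebra_simps)
  finally show ?thesis
    unfolding t_def vwp_quadratic_weight_sum_shift list.map by (simp only: mult.assoc)
qed

lemma vwp_5F4_recurrence:
  assumes "1 + a - b \<notin> \<int>\<^sub>\<le>\<^sub>0" "1 + a - c \<notin> \<int>\<^sub>\<le>\<^sub>0" "1 + a + of_nat (Suc N) \<notin> \<int>\<^sub>\<le>\<^sub>0"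
    and "b \<noteq> 0" "c \<noteq> 0"
  shows "(\<Sum>k\<le>Suc N. (a + 2 * of_nat k) * wp_coeff a [b, c, - of_nat (Suc N)] k) =
    (1 + a - b - c + of_nat N) * a * (a + 1) / ((1 + a - b) * (1 + a - c) * (2 + a + of_nat N)) *
      (\<Sum>m\<le>N. (a + 2 + 2 * of_nat m) * wp_coeff (a + 2) [b + 1, c + 1, - of_nat N] m)"
proof -
  define d :: complex where "d = - of_nat (Suc N)"
  define S where "S = (\<Sum>k\<le>Suc N. (a + 2 * of_nat k) * wp_coeff a [b, c, d] k)"
  define S' where "S' = (\<Sum>m\<le>N. (a + 2 + 2 * of_nat m) * wp_coeff (a + 2) [b + 1, c + 1, d + 1] m)"
  have "pochhammer d (Suc (Suc N)) = 0"
    unfolding d_def pochhammer_eq_0_iff by blast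
  with assms have
    "b * c * d * S = (a - b - c - d) * a * (a + 1) * (\<Prod>x\<leftarrow>[b, c, d]. x / (1 + a - x)) * S'"
    unfolding S_def S'_def d_def by (intro vwp_5F4_contiguous) (simp_all add: add_ac)
  also have "\<dots> = (a - b - c - d) * a * (a + 1) *
      (b * c * d / ((1 + a - b) * (1 + a - c) * (1 + a - d))) * S'"
    by (simp add: mult.assoc)
  finally have contiguous: "b * c * d * S = (a - b - c - d) * a * (a + 1) *
      (b * c * d / ((1 + a - b) * (1 + a - c) * (1 + a - d))) * S'" .
  have "b * c * d \<noteq> 0"
    using assms(4,5) unfolding d_def by (simp del: of_nat_Suc)
  \<comment> \<open>holds for \<open>w = 0\<close> as well, both sides then being 0\<close>
  moreover have "y = z * r / w" if "x \<noteq> 0" "x * y = z * (x / w) * r" for x y z r w :: complex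
    using that by (cases "w = 0") (simp_all add: field_simps)
  ultimately have "S = (a - b - c - d) * a * (a + 1) * S' / ((1 + a - b) * (1 + a - c) * (1 + a - d))"
    using contiguous by blast
  moreover have "a - b - c - d = 1 + a - b - c + of_nat N" "1 + a - d = 2 + a + of_nat N"
    "d + 1 = - of_nat N"
    unfolding d_def by simp_all
  ultimately show ?thesis
    unfolding S_def S'_def d_def[symmetric] by simp
qed

theorem vwp_5F4_sum:
  assumes "1 + a - b \<notin> \<int>\<^sub>\<le>\<^sub>0" "1 + a - c \<notin> \<int>\<^sub>\<le>\<^sub>0" "1 + a + of_nat N \<notin> \<int>\<^sub>\<le>\<^sub>0"
  shows "(\<Sum>k\<le>N. (a + 2 * of_nat k) * wp_coeff a [b, c, - of_nat N] k) =
    a * pochhammer (1 + a) N * pochhammer (1 + a - b - c) N /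
      (pochhammer (1 + a - b) N * pochhammer (1 + a - c) N)"
  using assms
proof (induction N arbitrary: a b c)
  case 0
  show ?case
    by (simp add: wp_coeff_def)
next
  case (Suc N)
  have nz: "pochhammer (1 + a - b) n \<noteq> 0" "pochhammer (1 + a - c) n \<noteq> 0"
    "2 + a + of_nat N \<noteq> 0" for n
    using Suc.prems
    by (auto dest: pochhammer_eq_0_imp_nonpos_Int plus_of_nat_eq_0_imp simp: add_ac)
  show ?case
  proof (cases "b = 0 \<or> c = 0")
    case True
    then have "wp_coeff a [b, c, - of_nat (Suc N)] (Suc k) = 0" for k
      by (auto simp: wp_coeff_def pochhammer_rec)
    then show ?thesis
      using True nz
      by (auto simp: sum.atMost_Suc_shift wp_coeff_def[of _ _ 0] simp del: sum.atMost_Suc)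
  next
    case False
    have "1 + (a + 2) - (x + 1) = (1 + a - x) + 1"
      "1 + (a + 2) + of_nat N = (1 + a + of_nat (Suc N)) + 1" for x :: complex
      by simp_all
    then have shifted: "1 + (a + 2) - (b + 1) \<notin> \<int>\<^sub>\<le>\<^sub>0" "1 + (a + 2) - (c + 1) \<notin> \<int>\<^sub>\<le>\<^sub>0"
      "1 + (a + 2) + of_nat N \<notin> \<int>\<^sub>\<le>\<^sub>0"
      using Suc.prems by (metis plus_one_in_nonpos_Ints_imp)+
    have "pochhammer (1 + a) (Suc N) * (2 + a + of_nat N) = pochhammer (1 + a) (Suc (Suc N))"
      by (simp add: pochhammer_Suc[of _ "Suc N"] add_ac)
    also have "\<dots> = (a + 1) * (a + 2) * pochhammer (1 + (a + 2)) N"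
      by (simp add: pochhammer_rec add_ac)
    finally have "pochhammer (1 + a) (Suc N) =
        (a + 1) * (a + 2) * pochhammer (1 + (a + 2)) N / (2 + a + of_nat N)"
      using nz(3) by (simp add: field_simps)
    moreover have "pochhammer (1 + a - b - c) (Suc N) =
        pochhammer (1 + (a + 2) - (b + 1) - (c + 1)) N * (1 + a - b - c + of_nat N)"
      by (simp add: pochhammer_Suc algebra_simps)
    moreover have "pochhammer (1 + a - x) (Suc N) =
        (1 + a - x) * pochhammer (1 + (a + 2) - (x + 1)) N" for x
      by (simp add: pochhammer_rec algebra_simps)
    moreover have "b \<noteq> 0" "c \<noteq> 0"
      using False by simp_all
    ultimately show ?thesis
      unfolding vwp_5F4_recurrence[OF Suc.prems \<open>b \<noteq> 0\<close> \<open>c \<noteq> 0\<close>] Suc.IH[OF shifted]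
      by (simp add: mult_ac)
  qed
qed

section \<open>Bailey's very-well-poised 4F3 sum at -1\<close>

definition trunc_factor :: "complex \<Rightarrow> nat \<Rightarrow> nat \<Rightarrow> complex" where
  "trunc_factor a N k = (-1) ^ k * pochhammer (- of_nat N) k / pochhammer (1 + a + of_nat N) k"

lemma wp_coeff_neg_of_nat:
  "wp_coeff a [b, c, - of_nat N] k = (-1) ^ k * wp_coeff a [b, c] k * trunc_factor a N k"
proof -
  have "((-1) ^ k * (-1) ^ k :: complex) = 1"
    by (simp flip: power_mult_distrib)
  then show ?thesis
    unfolding wp_coeff_def trunc_factor_def by (simp add: field_simps)
qed

lemma trunc_factor_eq_prod:
  "trunc_factor a N k = (\<Prod>j<k. (of_nat N - of_nat j) / (of_nat N + (1 + a + of_nat j)))"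
proof -
  have "trunc_factor a N k =
      (\<Prod>j<k. -1) * (\<Prod>j<k. - of_nat N + of_nat j) / (\<Prod>j<k. 1 + a + of_nat N + of_nat j)"
    unfolding trunc_factor_def pochhammer_prod atLeast0LessThan by simp
  also have "\<dots> = (\<Prod>j<k. -1 * (- of_nat N + of_nat j) / (1 + a + of_nat N + of_nat j))"
    by (simp only: prod.distrib prod_dividef)
  finally show ?thesis
    by (simp add: algebra_simps)
qed

lemma of_nat_add_quotient_LIMSEQ:
  "(\<lambda>N. (of_nat N + u) / (of_nat N + v :: complex)) \<longlonglongrightarrow> 1"
proof -
  have inf: "filterlim (\<lambda>N. of_nat N + v :: complex) at_infinity sequentially"
    by (rule tendsto_add_filterlim_at_infinity'[OF tendsto_of_nat tendsto_const])
  then have "(\<lambda>N. 1 + (u - v) / (of_nat N + v)) \<longlonglongrightarrow> 1 + 0"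
    by (intro tendsto_add tendsto_const tendsto_divide_0[OF tendsto_const])
  moreover have "eventually (\<lambda>N. of_nat N + v \<noteq> 0) sequentially"
    using inf unfolding filterlim_at_infinity[OF order.refl]
    by (auto elim!: allE[of _ 1] eventually_mono)
  then have "eventually (\<lambda>N. 1 + (u - v) / (of_nat N + v) = (of_nat N + u) / (of_nat N + v))
      sequentially"
    by eventually_elim (simp add: field_simps)
  ultimately show ?thesis
    by (simp add: tendsto_cong)
qed

lemma trunc_factor_LIMSEQ: "(\<lambda>N. trunc_factor a N k) \<longlonglongrightarrow> 1"
proof -
  have "(\<lambda>N. \<Prod>j<k. (of_nat N + - of_nat j) / (of_nat N + (1 + a + of_nat j))) \<longlonglongrightarrow> (\<Prod>j<k. 1)"
    by (intro tendsto_prod of_nat_add_quotient_LIMSEQ)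
  then show ?thesis
    by (simp add: trunc_factor_eq_prod)
qed

lemma prod_lessThan_le_power:
  fixes x :: "nat \<Rightarrow> real"
  assumes "\<And>j. j < k \<Longrightarrow> 0 \<le> x j" "\<And>j. j < k \<Longrightarrow> x j \<le> M" "\<And>j. j < k \<Longrightarrow> J \<le> j \<Longrightarrow> x j \<le> 1"
    and "1 \<le> M"
  shows "(\<Prod>j<k. x j) \<le> M ^ J"
  using assms(1-3)
proof (induction k)
  case 0
  show ?case
    using assms(4) by simp
next
  case (Suc k)
  have nonneg: "0 \<le> (\<Prod>j<k. x j)"
    using Suc.prems by (intro prod_nonneg) simp
  show ?case
  proof (cases "J \<le> k")
    case True
    then have "(\<Prod>j<k. x j) * x k \<le> M ^ J * 1"
      using Suc nonneg by (intro mult_mono) simp_all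
    then show ?thesis
      by simp
  next
    case False
    have "(\<Prod>j<k. x j) * x k \<le> M ^ k * M"
    proof (intro mult_mono)
      show "(\<Prod>j<k. x j) \<le> M ^ k"
        using Suc.prems assms(4) by (intro prod_le_power) simp_all
    qed (use Suc.prems assms(4) in auto)
    also have "\<dots> \<le> M ^ J"
      using False assms(4) power_increasing[of "Suc k" J M] by (simp add: mult.commute)
    finally show ?thesis
      by simp
  qed
qed

lemma trunc_factor_bounded:
  obtains C N0 where "\<And>N k. N \<ge> N0 \<Longrightarrow> norm (trunc_factor a N k) \<le> C"
proof -
  define \<alpha> where "\<alpha> = Re a"
  define J where "J = nat \<lceil>\<bar>\<alpha>\<bar>\<rceil>"
  define N0 where "N0 = nat \<lceil>2 * \<bar>\<alpha>\<bar> + 2\<rceil>"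
  have "norm (trunc_factor a N k) \<le> 2 ^ J" if "N \<ge> N0" for N k
  proof (cases "k \<le> N")
    case False
    then have "trunc_factor a N k = 0"
      unfolding trunc_factor_eq_prod by (intro prod_zero) (auto intro!: bexI[of _ N])
    then show ?thesis
      by simp
  next
    case True
    let ?f = "\<lambda>j. (real N - real j) / norm (of_nat N + (1 + a + of_nat j))"
    have "norm (trunc_factor a N k) = (\<Prod>j<k. ?f j)"
    proof -
      have num: "norm (of_nat N - of_nat j :: complex) = real N - real j" if "j < k" for j
        using that True norm_of_real[of "real N - real j"] by simp
      show ?thesis
        unfolding trunc_factor_eq_prod prod_norm[symmetric] norm_divide
        by (rule prod.cong) (simp_all add: num)
    qed
    also have "\<dots> \<le> 2 ^ J"
    proof (rule prod_lessThan_le_power)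
      fix j assume j: "j < k"
      have N0: "2 * \<bar>\<alpha>\<bar> + 2 \<le> real N"
        using that unfolding N0_def by linarith
      then have pos: "0 < 1 + \<alpha> + real N + real j"
        by linarith
      have "1 + \<alpha> + real N + real j \<le> norm (of_nat N + (1 + a + of_nat j) :: complex)"
        using complex_Re_le_cmod[of "of_nat N + (1 + a + of_nat j)"] unfolding \<alpha>_def by simp
      then have le: "?f j \<le> (real N - real j) / (1 + \<alpha> + real N + real j)"
        using pos j True by (intro divide_left_mono) (auto intro!: mult_pos_pos)
      show "0 \<le> ?f j"
        using j True by simp
      have "(real N - real j) / (1 + \<alpha> + real N + real j) \<le> 2"
        using pos N0 by (simp add: divide_le_eq)
      with le show "?f j \<le> 2"
        by linarith
      assume "J \<le> j"
      then have "(real N - real j) / (1 + \<alpha> + real N + real j) \<le> 1"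
        using pos unfolding J_def by (simp add: divide_le_eq)
      with le show "?f j \<le> 1"
        by linarith
    qed simp
    finally show ?thesis .
  qed
  with that show ?thesis .
qed

lemma wp_coeff_eq_pochhammer_quotient:
  "wp_coeff a [b, c] n =
     (\<Prod>x\<leftarrow>[a, b, c]. pochhammer x n) / (\<Prod>y\<leftarrow>[1 + a - b, 1 + a - c, 1]. pochhammer y n)"
  by (simp add: wp_coeff_def pochhammer_fact[symmetric] ac_simps)

lemma wp_coeff_Suc_bound:
  assumes "1 + a - b \<notin> \<int>\<^sub>\<le>\<^sub>0" "1 + a - c \<notin> \<int>\<^sub>\<le>\<^sub>0"
  obtains B where "\<And>n. n \<ge> 1 \<Longrightarrow>
    norm (wp_coeff a [b, c] (Suc n)) \<le> B * real n powr (Re (2 * b + 2 * c - a) - 3)"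
proof -
  have "length [a, b, c] = length [1 + a - b, 1 + a - c, 1]"
    "\<forall>y\<in>set [1 + a - b, 1 + a - c, 1]. y \<notin> \<int>\<^sub>\<le>\<^sub>0"
    using assms by simp_all
  from pochhammer_quotient_Suc_bound[OF this] obtain B where B:
    "\<And>n. n \<ge> 1 \<Longrightarrow> norm (wp_coeff a [b, c] (Suc n)) \<le>
       B * real n powr Re (sum_list [a, b, c] - sum_list [1 + a - b, 1 + a - c, 1])"
    unfolding wp_coeff_eq_pochhammer_quotient by blast
  have exponent:
    "Re (sum_list [a, b, c] - sum_list [1 + a - b, 1 + a - c, 1]) = Re (2 * b + 2 * c - a) - 3"
    by simp
  show ?thesis
    using B unfolding exponent by (rule that)
qed

lemma summable_vwp_4F3:
  assumes "1 + a - b \<notin> \<int>\<^sub>\<le>\<^sub>0" "1 + a - c \<notin> \<int>\<^sub>\<le>\<^sub>0" "Re (a - 2 * b - 2 * c) > -1"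
  shows "summable (\<lambda>n. norm ((a + 2 * of_nat n) * wp_coeff a [b, c] n))"
proof -
  define e where "e = Re (2 * b + 2 * c - a) - 2"
  have exponent: "Re (2 * b + 2 * c - a) - 3 = e - 1"
    unfolding e_def by simp
  obtain B where B: "\<And>n. n \<ge> 1 \<Longrightarrow> norm (wp_coeff a [b, c] (Suc n)) \<le> B * real n powr (e - 1)"
    using wp_coeff_Suc_bound[OF assms(1,2), unfolded exponent] by metis
  have bound: "norm ((a + 2 * of_nat (Suc n)) * wp_coeff a [b, c] (Suc n)) \<le>
      (norm a + 4) * B * real n powr e" if n: "n \<ge> 1" for n
  proof -
    have "norm (a + 2 * of_nat (Suc n)) \<le> norm a + 2 * real (Suc n)"
      using norm_triangle_ineq[of a "2 * of_nat (Suc n)"] by (simp add: norm_mult del: of_nat_Suc)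
    also have "\<dots> \<le> (norm a + 4) * real n"
    proof -
      have "norm a * 1 \<le> norm a * real n"
        using n by (intro mult_left_mono) simp_all
      then show ?thesis
        using n by (simp add: distrib_right)
    qed
    moreover have "0 \<le> B * real n powr (e - 1)"
      using B[OF n] by (rule order_trans[OF norm_ge_zero])
    then have "0 \<le> B"
      using n by (simp add: zero_le_mult_iff)
    ultimately have "norm ((a + 2 * of_nat (Suc n)) * wp_coeff a [b, c] (Suc n)) \<le>
        (norm a + 4) * real n * (B * real n powr (e - 1))"
      unfolding norm_mult using B[OF n] by (intro mult_mono) simp_all
    also have "\<dots> = (norm a + 4) * B * (real n * real n powr (e - 1))"
      by (simp only: mult_ac)
    also have "real n * real n powr (e - 1) = real n powr e"
      using n by (simp add: powr_diff)
    finally show ?thesis .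
  qed
  have "summable (\<lambda>n. (norm a + 4) * B * real n powr e)"
    using assms(3) unfolding e_def by (intro summable_mult) (simp add: summable_real_powr_iff)
  moreover have "eventually (\<lambda>n. norm (norm ((a + 2 * of_nat (Suc n)) * wp_coeff a [b, c] (Suc n)))
      \<le> (norm a + 4) * B * real n powr e) sequentially"
    using eventually_ge_at_top[of 1]
    by eventually_elim (use bound in \<open>simp only: real_norm_def abs_norm_cancel\<close>)
  ultimately have "summable (\<lambda>n. norm ((a + 2 * of_nat (Suc n)) * wp_coeff a [b, c] (Suc n)))"
    by (rule summable_comparison_test_ev[rotated])
  then show ?thesis
    by (subst summable_Suc_iff[symmetric]) simp
qed

lemma wp_coeff_cubic_weight_LIMSEQ_zero:
  assumes "1 + a - b \<notin> \<int>\<^sub>\<le>\<^sub>0" "1 + a - c \<notin> \<int>\<^sub>\<le>\<^sub>0" "Re (a - 2 * b - 2 * c) > 0"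
  shows "(\<lambda>n. wp_coeff a [b, c] n * (of_nat n * (a - b + of_nat n) * (a - c + of_nat n))) \<longlonglongrightarrow> 0"
proof -
  define r where "r = Re (2 * b + 2 * c - a)"
  obtain B where B: "\<And>n. n \<ge> 1 \<Longrightarrow> norm (wp_coeff a [b, c] (Suc n)) \<le> B * real n powr (r - 3)"
    using wp_coeff_Suc_bound[OF assms(1,2)] unfolding r_def by metis
  define K where "K = 2 * B * (norm (a - b) + 2) * (norm (a - c) + 2)"
  have linear: "norm (z + of_nat (Suc n)) \<le> (norm z + 2) * real n" if "n \<ge> 1" for z :: complex and n
  proof -
    have "norm (z + of_nat (Suc n)) \<le> norm z + real (Suc n)"
      using norm_triangle_ineq[of z "of_nat (Suc n)"] by (simp del: of_nat_Suc)
    moreover have "norm z * 1 \<le> norm z * real n"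
      using that by (intro mult_left_mono) simp_all
    ultimately show ?thesis
      using that by (simp add: distrib_right)
  qed
  have bound: "norm (wp_coeff a [b, c] (Suc n) *
      (of_nat (Suc n) * (a - b + of_nat (Suc n)) * (a - c + of_nat (Suc n)))) \<le> K * real n powr r"
    if n: "n \<ge> 1" for n
  proof -
    have "norm (wp_coeff a [b, c] (Suc n) *
          (of_nat (Suc n) * (a - b + of_nat (Suc n)) * (a - c + of_nat (Suc n)))) \<le>
        B * real n powr (r - 3) *
          (2 * real n * ((norm (a - b) + 2) * real n) * ((norm (a - c) + 2) * real n))"
      unfolding norm_mult norm_of_nat
      using B[OF n] order_trans[OF norm_ge_zero B[OF n]] linear[OF n] n
      by (intro mult_mono) (simp_all del: of_nat_Suc)
    also have "\<dots> = K * (real n powr (r - 3) * real n ^ 3)"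
      unfolding K_def by (simp add: power3_eq_cube mult_ac)
    also have "real n powr (r - 3) * real n ^ 3 = real n powr r"
      using n by (simp add: powr_diff powr_numeral)
    finally show ?thesis .
  qed
  have "(\<lambda>n. K * real n powr r) \<longlonglongrightarrow> 0"
    using assms(3) unfolding r_def
    by (intro tendsto_mult_right_zero tendsto_neg_powr filterlim_real_sequentially) simp
  moreover have "eventually (\<lambda>n. norm (wp_coeff a [b, c] (Suc n) *
      (of_nat (Suc n) * (a - b + of_nat (Suc n)) * (a - c + of_nat (Suc n)))) \<le> K * real n powr r)
      sequentially"
    using eventually_ge_at_top[of 1] by eventually_elim (rule bound)
  ultimately have "(\<lambda>n. wp_coeff a [b, c] (Suc n) *
      (of_nat (Suc n) * (a - b + of_nat (Suc n)) * (a - c + of_nat (Suc n)))) \<longlonglongrightarrow> 0"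
    by (rule Lim_null_comparison[rotated])
  then show ?thesis
    by (rule LIMSEQ_imp_Suc)
qed

lemma vwp_4F3_quadratic_sums_zero:
  assumes "1 + a - b \<notin> \<int>\<^sub>\<le>\<^sub>0" "1 + a - c \<notin> \<int>\<^sub>\<le>\<^sub>0" "Re (a - 2 * b - 2 * c) > 0"
  shows "(\<lambda>n. (a + 2 * of_nat n) * wp_coeff a [b, c] n * (-1) ^ n *
           (of_nat n * (of_nat n + a) + b * c)) sums 0"
proof -
  define X where
    "X n = (-1) ^ n * (wp_coeff a [b, c] n * (of_nat n * (a - b + of_nat n) * (a - c + of_nat n)))" for n
  have "X n - X (Suc n) =
      (a + 2 * of_nat n) * wp_coeff a [b, c] n * (-1) ^ n * (of_nat n * (of_nat n + a) + b * c)" for n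
  proof -
    have "X (Suc n) = - ((-1) ^ n *
        (wp_coeff a [b, c] (Suc n) * (of_nat (Suc n) * (\<Prod>x\<leftarrow>[b, c]. a - x + of_nat (Suc n)))))"
      unfolding X_def by simp
    also have "\<dots> = - ((-1) ^ n *
        (wp_coeff a [b, c] n * ((a + of_nat n) * (\<Prod>x\<leftarrow>[b, c]. x + of_nat n))))"
      using assms(1,2) by (subst wp_coeff_Suc) simp_all
    finally show ?thesis
      by (simp only: X_def[of n]) (simp add: algebra_simps)
  qed
  moreover have "X \<longlonglongrightarrow> 0"
  proof (rule tendsto_norm_zero_cancel)
    have norm_X: "norm (X n) =
        norm (wp_coeff a [b, c] n * (of_nat n * (a - b + of_nat n) * (a - c + of_nat n)))" for n
      unfolding X_def
      by (simp only: norm_mult norm_power norm_minus_cancel norm_one power_one mult_1_left)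
    show "(\<lambda>n. norm (X n)) \<longlonglongrightarrow> 0"
      unfolding norm_X using tendsto_norm_zero[OF wp_coeff_cubic_weight_LIMSEQ_zero[OF assms]] .
  qed
  then have "(\<lambda>n. X n - X (Suc n)) sums (X 0 - 0)"
    by (rule telescope_sums')
  ultimately show ?thesis
    by (simp add: X_def)
qed

lemma suminf_trunc_factor_LIMSEQ:
  assumes "summable (\<lambda>k. norm (t k))"
  shows "(\<lambda>N. \<Sum>k. t k * trunc_factor a N k) \<longlonglongrightarrow> (\<Sum>k. t k)"
proof -
  obtain C N0 where C: "\<And>N k. N \<ge> N0 \<Longrightarrow> norm (trunc_factor a N k) \<le> C"
    using trunc_factor_bounded[of a] by metis
  have "(\<lambda>N. \<Sum>k. t k * trunc_factor a N k) \<longlonglongrightarrow> (\<Sum>k. t k * 1)"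
  proof (rule tannerys_theorem[THEN conjunct2, THEN conjunct2])
    show "(\<lambda>N. t k * trunc_factor a N k) \<longlonglongrightarrow> t k * 1" for k
      by (intro tendsto_mult tendsto_const trunc_factor_LIMSEQ)
    have "norm (t k * trunc_factor a N k) \<le> C * norm (t k)" if "N \<ge> N0" for k N
      unfolding norm_mult using mult_left_mono[OF C[OF that, of k] norm_ge_zero[of "t k"]]
      by (simp only: mult.commute)
    then show "eventually (\<lambda>(k, N). norm (t k * trunc_factor a N k) \<le> C * norm (t k))
        (at_top \<times>\<^sub>F sequentially)"
      unfolding eventually_prod_sequentially by (intro exI[of _ N0] allI impI) simp
    show "summable (\<lambda>k. C * norm (t k))"
      using assms by (rule summable_mult)
  qed simp
  then show ?thesis
    by simp
qed

lemma vwp_4F3_truncated_sum: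
  assumes "1 + a - b \<notin> \<int>\<^sub>\<le>\<^sub>0" "1 + a - c \<notin> \<int>\<^sub>\<le>\<^sub>0" "1 + a + of_nat N \<notin> \<int>\<^sub>\<le>\<^sub>0"
  shows "(\<Sum>k. (a + 2 * of_nat k) * wp_coeff a [b, c] k * (-1) ^ k * trunc_factor a N k) =
    a * pochhammer (1 + a) N * pochhammer (1 + a - b - c) N /
      (pochhammer (1 + a - b) N * pochhammer (1 + a - c) N)"
proof -
  define t where "t k = (a + 2 * of_nat k) * wp_coeff a [b, c] k * (-1) ^ k * trunc_factor a N k" for k
  have "t k = 0" if "k \<notin> {..N}" for k
    using that unfolding t_def trunc_factor_def by (auto simp: pochhammer_eq_0_iff)
  then have "t sums (\<Sum>k\<le>N. t k)"
    by (intro sums_finite) simp_all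
  moreover have "t k = (a + 2 * of_nat k) * wp_coeff a [b, c, - of_nat N] k" for k
    by (simp add: t_def wp_coeff_neg_of_nat mult_ac)
  then have "(\<Sum>k\<le>N. t k) = a * pochhammer (1 + a) N * pochhammer (1 + a - b - c) N /
      (pochhammer (1 + a - b) N * pochhammer (1 + a - c) N)"
    using vwp_5F4_sum[OF assms] by simp
  ultimately show ?thesis
    unfolding t_def[symmetric] by (simp add: sums_iff)
qed

theorem vwp_4F3_sums:
  assumes "1 + a - b \<notin> \<int>\<^sub>\<le>\<^sub>0" "1 + a - c \<notin> \<int>\<^sub>\<le>\<^sub>0" "Re (a - 2 * b - 2 * c) > -1"
  shows "(\<lambda>n. (a + 2 * of_nat n) * wp_coeff a [b, c] n * (-1) ^ n) sums
           (a * Gamma (1 + a - b) * Gamma (1 + a - c) / (Gamma (1 + a) * Gamma (1 + a - b - c)))"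
proof -
  define t where "t n = (a + 2 * of_nat n) * wp_coeff a [b, c] n * (-1) ^ n" for n
  define G where "G = Gamma (1 + a - b) * Gamma (1 + a - c) / (Gamma (1 + a) * Gamma (1 + a - b - c))"
  define P where "P N = pochhammer (1 + a) N * pochhammer (1 + a - b - c) N /
      (pochhammer (1 + a - b) N * pochhammer (1 + a - c) N)" for N
  have summable: "summable (\<lambda>n. norm (t n))"
    using summable_vwp_4F3[OF assms] by (simp add: t_def norm_mult norm_power)
  have terminating: "1 + a + of_nat N \<notin> \<int>\<^sub>\<le>\<^sub>0" if "N \<ge> nat \<lceil>- Re a\<rceil>" for N
    using that by (auto elim!: nonpos_Ints_cases simp: complex_eq_iff)
  have "eventually (\<lambda>N. (\<Sum>k. t k * trunc_factor a N k) = a * P N) sequentially"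
    using eventually_ge_at_top[of "nat \<lceil>- Re a\<rceil>"]
    by eventually_elim (simp add: t_def P_def vwp_4F3_truncated_sum[OF assms(1,2) terminating])
  moreover have "(\<lambda>N. a * P N) \<longlonglongrightarrow> a * G"
    using pochhammer_balanced_quotient_LIMSEQ[of "[1 + a, 1 + a - b - c]" "[1 + a - b, 1 + a - c]"]
      assms(1,2)
    unfolding P_def G_def by (intro tendsto_mult_left) (simp add: Gamma_def divide_inverse mult_ac)
  ultimately have "(\<lambda>N. \<Sum>k. t k * trunc_factor a N k) \<longlonglongrightarrow> a * G"
    by (simp add: tendsto_cong)
  with suminf_trunc_factor_LIMSEQ[OF summable] have "suminf t = a * G"
    by (rule LIMSEQ_unique)
  with summable_norm_cancel[OF summable] show ?thesis
    unfolding t_def G_def by (simp add: sums_iff)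
qed

section \<open>The 6F5 evaluation\<close>

lemma pochhammer_plus1_quotient:
  assumes "x \<notin> \<int>\<^sub>\<le>\<^sub>0"
  shows "pochhammer (x + 1) n / pochhammer x n = (x + of_nat n) / (x :: complex)"
proof -
  have "x \<noteq> 0" "pochhammer x n \<noteq> 0"
    using assms by (auto dest: pochhammer_eq_0_imp_nonpos_Int)
  moreover have "x * pochhammer (x + 1) n = pochhammer x n * (x + of_nat n)"
    by (metis pochhammer_Suc pochhammer_rec)
  ultimately show ?thesis
    by (simp add: field_simps)
qed

lemma vwp_6F5_sums:
  assumes "a / 2 \<notin> \<int>\<^sub>\<le>\<^sub>0" "p \<notin> \<int>\<^sub>\<le>\<^sub>0" "a - p \<notin> \<int>\<^sub>\<le>\<^sub>0"
    and "1 + a - b \<notin> \<int>\<^sub>\<le>\<^sub>0" "1 + a - c \<notin> \<int>\<^sub>\<le>\<^sub>0" "Re (a - 2 * b - 2 * c) > 0"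
  shows "(\<lambda>n. (\<Prod>x\<leftarrow>[a, a / 2 + 1, a - p + 1, p + 1, b, c]. pochhammer x n) /
      ((\<Prod>y\<leftarrow>[a / 2, p, a - p, 1 + a - b, 1 + a - c]. pochhammer y n) * fact n) * (-1) ^ n)
    sums ((1 - b * c / (p * (a - p))) *
      (Gamma (1 + a - b) * Gamma (1 + a - c) / (Gamma (1 + a) * Gamma (1 + a - b - c))))"
proof -
  define q where "q = a - p"
  define t where "t n = (a + 2 * of_nat n) * wp_coeff a [b, c] n * (-1) ^ n" for n
  define G where "G = Gamma (1 + a - b) * Gamma (1 + a - c) / (Gamma (1 + a) * Gamma (1 + a - b - c))"
  have "a \<noteq> 0" "p \<noteq> 0" "q \<noteq> 0"
    using assms(1-3) unfolding q_def by auto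
  have "(\<Prod>x\<leftarrow>[a, a / 2 + 1, q + 1, p + 1, b, c]. pochhammer x n) /
      ((\<Prod>y\<leftarrow>[a / 2, p, q, 1 + a - b, 1 + a - c]. pochhammer y n) * fact n) * (-1) ^ n =
      (t n * (1 - b * c / (p * q)) + t n * (of_nat n * (of_nat n + a) + b * c) / (p * q)) / a" for n
  proof -
    have "(\<Prod>x\<leftarrow>[a, a / 2 + 1, q + 1, p + 1, b, c]. pochhammer x n) /
        ((\<Prod>y\<leftarrow>[a / 2, p, q, 1 + a - b, 1 + a - c]. pochhammer y n) * fact n) * (-1) ^ n =
        wp_coeff a [b, c] n * (-1) ^ n * (pochhammer (a / 2 + 1) n / pochhammer (a / 2) n) *
          (pochhammer (q + 1) n / pochhammer q n) * (pochhammer (p + 1) n / pochhammer p n)"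
      by (simp add: wp_coeff_def mult_ac)
    also have "\<dots> = wp_coeff a [b, c] n * (-1) ^ n * ((a / 2 + of_nat n) / (a / 2)) *
          ((q + of_nat n) / q) * ((p + of_nat n) / p)"
      unfolding q_def pochhammer_plus1_quotient[OF assms(1)] pochhammer_plus1_quotient[OF assms(2)]
        pochhammer_plus1_quotient[OF assms(3)] ..
    also have "\<dots> = t n / a * ((q + of_nat n) * (p + of_nat n) / (p * q))"
      using \<open>a \<noteq> 0\<close> \<open>p \<noteq> 0\<close> \<open>q \<noteq> 0\<close> unfolding t_def by (simp add: field_simps)
    also have "(q + of_nat n) * (p + of_nat n) = p * q + of_nat n * (of_nat n + a)"
      unfolding q_def by (simp add: algebra_simps)
    also have "t n / a * ((p * q + of_nat n * (of_nat n + a)) / (p * q)) =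
        (t n * (1 - b * c / (p * q)) + t n * (of_nat n * (of_nat n + a) + b * c) / (p * q)) / a"
      using \<open>a \<noteq> 0\<close> \<open>p \<noteq> 0\<close> \<open>q \<noteq> 0\<close> by (simp add: field_simps)
    finally show ?thesis .
  qed
  moreover have "(\<lambda>n. (t n * (1 - b * c / (p * q)) +
      t n * (of_nat n * (of_nat n + a) + b * c) / (p * q)) / a) sums
      ((a * G * (1 - b * c / (p * q)) + 0 / (p * q)) / a)"
    using vwp_4F3_sums[OF assms(4,5)] vwp_4F3_quadratic_sums_zero[OF assms(4-6)] assms(6)
    unfolding t_def G_def by (intro sums_divide sums_add sums_mult2) (simp_all add: mult.assoc)
  ultimately show ?thesis
    using \<open>a \<noteq> 0\<close> unfolding q_def G_def by (simp add: mult_ac)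
qed

lemma divide_Gamma_minus_one:
  "x / (y * Gamma (z - 1)) = (z - 1) * (x / (y * Gamma (z :: complex)))"
  using rGamma_plus1[of "z - 1"] by (simp add: Gamma_def field_simps)

lemma Gamma_over_Gamma_plus1:
  assumes "z \<notin> \<int>\<^sub>\<le>\<^sub>0"
  shows "Gamma z / Gamma (z + 1) = 1 / (z :: complex)"
  using assms by (simp add: Gamma_plus1 Gamma_eq_zero_iff)

lemma divide_k_parameter:
  fixes a1 d2 e h k p q :: complex
  assumes "a1 \<noteq> 0" "p \<noteq> 0" "q \<noteq> 0" "h = p * q / a1" "d2 \<noteq> h" "k = h * e / (d2 - h)" "k \<noteq> 0"
  shows "- e * (1 / k) = 1 - a1 * d2 / (p * q)"
proof -
  have "h \<noteq> 0" "d2 - h \<noteq> 0" "e \<noteq> 0"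
    using assms by auto
  then have "- e * (1 / k) = (h - d2) / h"
    unfolding assms(6) by (simp add: field_simps)
  also have "\<dots> = 1 - a1 * d2 / (p * q)"
    unfolding assms(4) using assms(1-3) by (simp add: field_simps)
  finally show ?thesis .
qed

theorem mainTheorem5:
  fixes f a1 p d2 h k :: complex
  assumes conv: "Re (f - 2*a1 - 2*d2 - 2) > -1"
    and lower: "(f - 1)/2 \<notin> \<int>\<^sub>\<le>\<^sub>0" "p \<notin> \<int>\<^sub>\<le>\<^sub>0" "f - p - 1 \<notin> \<int>\<^sub>\<le>\<^sub>0"
               "f - a1 \<notin> \<int>\<^sub>\<le>\<^sub>0" "f - d2 \<notin> \<int>\<^sub>\<le>\<^sub>0"
    and a1: "a1 \<noteq> 0"
    and h_def: "h = p * (f - p - 1) / a1"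
    and dh: "d2 \<noteq> h"
    and k_def: "k = h * (1 + d2 + a1 - f) / (d2 - h)"
    and k: "k \<notin> \<int>\<^sub>\<le>\<^sub>0"
  shows "hypergeom [f - 1, (f + 1)/2, f - p, p + 1, a1, d2]
                   [(f - 1)/2, p, f - p - 1, f - a1, f - d2] (-1)
         = Gamma (f - a1) * Gamma (f - d2) / (Gamma f * Gamma (f - a1 - d2 - 1))
           * (Gamma k / Gamma (k + 1))"
proof -
  have params: "(f - 1) / 2 + 1 = (f + 1) / 2" "f - 1 - p = f - p - 1" "f - p - 1 + 1 = f - p"
    "1 + (f - 1) - x = f - x" "1 + (f - 1) = f" for x :: complex
    by (simp_all add: field_simps)
  have "Re (f - 1 - 2 * a1 - 2 * d2) > 0"
    using conv by simp
  from vwp_6F5_sums[of "f - 1" p a1 d2, unfolded params, OF lower this]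
  have "hypergeom [f - 1, (f + 1)/2, f - p, p + 1, a1, d2]
      [(f - 1)/2, p, f - p - 1, f - a1, f - d2] (-1) =
      (1 - a1 * d2 / (p * (f - p - 1))) *
        (Gamma (f - a1) * Gamma (f - d2) / (Gamma f * Gamma (f - a1 - d2)))"
    unfolding hypergeom_def by (rule sums_unique[symmetric])
  also have "1 - a1 * d2 / (p * (f - p - 1)) = - (1 + d2 + a1 - f) * (1 / k)"
    using lower(2,3) k by (intro divide_k_parameter[OF a1 _ _ h_def dh k_def, symmetric]) auto
  also have "- (1 + d2 + a1 - f) = f - a1 - d2 - 1"
    by simp
  also have "(f - a1 - d2 - 1) * (1 / k) *
      (Gamma (f - a1) * Gamma (f - d2) / (Gamma f * Gamma (f - a1 - d2))) =
      Gamma (f - a1) * Gamma (f - d2) / (Gamma f * Gamma (f - a1 - d2 - 1)) *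
        (Gamma k / Gamma (k + 1))"
    unfolding Gamma_over_Gamma_plus1[OF k] divide_Gamma_minus_one by (simp only: mult_ac)
  finally show ?thesis .
qed

end
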